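(* Let $c$ and $e$ be confocal ellipses with $c$ in the interior of $e$, and let $P_1P_2\dots P_N$ be an $N$-periodic billiard in $e$ with caustic $c$, with exterior angles $\theta_1,\dots,\theta_N$ at $P_1,\dots,P_N$. If $N\equiv 0\pmod 2$, then \[\sum_{i=1}^N(-1)^i\sin\theta_i=0,\] and if $N\equiv 0\pmod 4$, then \[\sum_{i=1}^{N/2}(-1)^i\sin\theta_i=0.\]
   Context: A billiard in $e$ with caustic $c$ is a sequence of points $P_1,P_2,\dots$ on $e$ such that each line $P_iP_{i+1}$ is tangent to $c$ and $P_{i-1}P_i$, $P_iP_{i+1}$ are the two tangents from $P_i$ to $c$; it is traversed counterclockwise and is $N$-periodic if $P_{i+N}=P_i$ for all $i$ (indices mod $N$). The exterior angle $\theta_i$ at $P_i$ is the angle between the directions $\overrightarrow{P_{i-1}P_i}$ and $\overrightarrow{P_iP_{i+1}}$; equivalently $\theta_i/2$ is the angle between each tangent from $P_i$ to $c$ and the tangent of $e$ at $P_i$. *)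

theory Defs
  imports "HOL-Analysis.Analysis"
begin

definition ellipse :: "complex \<Rightarrow> complex \<Rightarrow> real \<Rightarrow> complex set" where
  "ellipse F1 F2 s = {X. dist X F1 + dist X F2 = 2 * s}"

definition is_ellipse_param :: "complex \<Rightarrow> complex \<Rightarrow> real \<Rightarrow> bool" where
  "is_ellipse_param F1 F2 s \<longleftrightarrow> 2 * s > dist F1 F2"

definition on_line :: "complex \<Rightarrow> complex \<Rightarrow> complex \<Rightarrow> bool" where
  "on_line A B X \<longleftrightarrow> (\<exists>t::real. X = A + of_real t * (B - A))"

definition tangent_line :: "complex set \<Rightarrow> complex \<Rightarrow> complex \<Rightarrow> bool" where
  "tangent_line C A B \<longleftrightarrow> A \<noteq> B \<and> (\<exists>!X. X \<in> C \<and> on_line A B X)"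

text \<open>Cross product (signed area): positive iff v is obtained from u by a left turn.\<close>

definition cross2 :: "complex \<Rightarrow> complex \<Rightarrow> real" where
  "cross2 u v = Re u * Im v - Im u * Re v"

text \<open>Vertices P i on E, each line P i P (i+1) tangent to C, the two lines through P i
  are distinct (the two tangents from P i), and the polygon turns left at each vertex.\<close>

definition periodic_billiard :: "complex set \<Rightarrow> complex set \<Rightarrow> nat \<Rightarrow> (int \<Rightarrow> complex) \<Rightarrow> bool" where
  "periodic_billiard E C N P \<longleftrightarrow>
     (\<forall>i. P i \<in> E) \<and>
     (\<forall>i. tangent_line C (P i) (P (i + 1))) \<and>
     (\<forall>i. \<not> on_line (P (i - 1)) (P i) (P (i + 1))) \<and>
     (\<forall>i. cross2 (P i - P (i - 1)) (P (i + 1) - P i) > 0) \<and>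
     (\<forall>i. P (i + int N) = P i)"

definition vec_angle :: "complex \<Rightarrow> complex \<Rightarrow> real" where
  "vec_angle u v = arccos ((u \<bullet> v) / (norm u * norm v))"

definition ext_angle :: "(int \<Rightarrow> complex) \<Rightarrow> int \<Rightarrow> real" where
  "ext_angle P i = vec_angle (P i - P (i - 1)) (P (i + 1) - P i)"

end

theory Submission
  imports Defs
begin

(*
  After a rigid motion the foci are +f and -f on the real axis, the caustic is
  x^2/A + y^2/B = 1 and the outer ellipse is x^2/a2 + y^2/b2 = 1 with a2 - A = b2 - B.
  Let d_j be the signed distance from the centre to the side P_j P_(j+1). The reflection law
  at P_i together with confocality gives sin theta_i = K (d_(i-1) + d_i) for a constant K, so
  the alternating sum over i = 1..n telescopes to K ((-1)^n d_n - d_0), which vanishes for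
  n = N even by periodicity.

  For the half sum, side j is the tangent to the caustic at the point with parameter s_j, and
  d_j depends on s_j only modulo pi. The billiard map lifts to a strictly increasing F with
  F (s + pi) = F s + pi, and F^N s_0 = s_0 + 2 m pi forces F^(N/2) s_0 = s_0 + m pi: side N/2
  is the reflection of side 0 in the centre. Hence d_(N/2) = d_0, and (-1)^(N/2) = 1 if 4 | N.
*)

section \<open>Plane geometry\<close>

lemma ex1_bij_iff:
  assumes "bij g"
  shows "(\<exists>!y. P y) \<longleftrightarrow> (\<exists>!x. P (g x))"
proof
  assume "\<exists>!y. P y"
  then obtain y where y: "P y" "\<And>y'. P y' \<Longrightarrow> y' = y" by blast
  obtain x where "y = g x" using assms by (metis bij_pointE)
  then show "\<exists>!x. P (g x)" using y bij_is_inj[OF assms] by (metis injD)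
next
  assume "\<exists>!x. P (g x)"
  then obtain x where x: "P (g x)" "\<And>x'. P (g x') \<Longrightarrow> x' = x" by blast
  have "y = g x" if "P y" for y
    using assms that x(2) by (metis bij_pointE)
  then show "\<exists>!y. P y" using x(1) by blast
qed

lemma cross2_mult_both: "cross2 (w * u) (w * v) = (cmod w)^2 * cross2 u v"
  unfolding cross2_def cmod_def by (simp add: algebra_simps power2_eq_square)

lemma inner_mult_both: "(w * u) \<bullet> (w * v) = (cmod w)^2 * (u \<bullet> v)"
  unfolding inner_complex_def cmod_def by (simp add: algebra_simps power2_eq_square)

lemma vec_angle_mult_both:
  assumes "w \<noteq> 0"
  shows "vec_angle (w * u) (w * v) = vec_angle u v"
  using assms by (simp add: vec_angle_def inner_mult_both norm_mult power2_eq_square)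

lemma sin_vec_angle:
  assumes "u \<noteq> 0" "v \<noteq> 0"
  shows "sin (vec_angle u v) = \<bar>cross2 u v\<bar> / (cmod u * cmod v)"
proof -
  define c where "c = (u \<bullet> v) / (cmod u * cmod v)"
  have n: "cmod u * cmod v > 0" using assms by simp
  have lagrange: "(u \<bullet> v)^2 + (cross2 u v)^2 = (cmod u * cmod v)^2"
    unfolding inner_complex_def cross2_def cmod_def power_mult_distrib
    by (simp add: power2_eq_square algebra_simps)
  have "1 - c^2 = ((cmod u * cmod v)^2 - (u \<bullet> v)^2) / (cmod u * cmod v)^2"
    using n assms unfolding c_def by (simp add: power_divide diff_divide_distrib)
  then have sq: "1 - c^2 = (cross2 u v / (cmod u * cmod v))^2"
    using lagrange by (simp add: power_divide)
  then have "c^2 \<le> 1" by (metis diff_ge_0_iff_ge zero_le_power2)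
  then have "\<bar>c\<bar> \<le> 1" by (simp add: abs_square_le_1)
  then have "sin (arccos c) = sqrt (1 - c^2)" by (simp add: sin_arccos abs_le_iff)
  then show ?thesis
    unfolding vec_angle_def c_def[symmetric] sq using n by (simp add: abs_div)
qed

definition origin_line_dist :: "complex \<Rightarrow> complex \<Rightarrow> real" where
  "origin_line_dist X Y = cross2 X (Y - X) / cmod (Y - X)"

lemma on_line_affine_image_iff:
  assumes "linear L" "inj L"
  shows "on_line (c + L a) (c + L b) (c + L x) \<longleftrightarrow> on_line a b x"
proof -
  have "c + L a + of_real t * (c + L b - (c + L a)) = c + L (a + of_real t * (b - a))" for t
    using linear_diff[OF assms(1)] linear_add[OF assms(1)] linear_scale[OF assms(1)]
    by (simp add: scaleR_conv_of_real[symmetric])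
  then show ?thesis
    unfolding on_line_def using assms(2) by (simp add: inj_eq)
qed

lemma tangent_line_affine_image_iff:
  assumes "linear L" "bij L"
  shows "tangent_line C (c + L a) (c + L b) \<longleftrightarrow> tangent_line ((\<lambda>z. c + L z) -` C) a b"
proof -
  have bij: "bij (\<lambda>z. c + L z)"
  proof (rule bijI)
    show "inj (\<lambda>z. c + L z)"
      using bij_is_inj[OF assms(2)] by (simp add: inj_def)
    show "surj (\<lambda>z. c + L z)"
      using bij_is_surj[OF assms(2)] by (metis add.commute diff_add_cancel surj_def)
  qed
  have "inj L" using assms(2) by (rule bij_is_inj)
  then show ?thesis
    unfolding tangent_line_def ex1_bij_iff[OF bij, of "\<lambda>Z. Z \<in> C \<and> on_line _ _ Z"]
    using on_line_affine_image_iff[OF assms(1)] by (simp add: inj_eq)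
qed

lemma ext_angle_similarity:
  assumes "w \<noteq> 0"
  shows "ext_angle (\<lambda>j. c + w * P j) i = ext_angle P i"
  unfolding ext_angle_def using assms
  by (simp add: vec_angle_mult_both flip: right_diff_distrib)

lemma periodic_billiard_similarity:
  assumes w: "w \<noteq> 0" and billiard: "periodic_billiard E C N (\<lambda>j. c + w * P j)"
  shows "periodic_billiard ((\<lambda>z. c + w * z) -` E) ((\<lambda>z. c + w * z) -` C) N P"
proof -
  have lin: "linear ((*) w)" by (rule bounded_linear.linear[OF bounded_linear_mult_right])
  have bij: "bij ((*) w)"
    by (rule bij_betw_byWitness[where f' = "\<lambda>z. z / w"]) (use w in auto)
  note tangent = tangent_line_affine_image_iff[OF lin bij]
  note on_line = on_line_affine_image_iff[OF lin bij_is_inj[OF bij]]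
  have diff: "c + w * a - (c + w * b) = w * (a - b)" for a b by (simp add: algebra_simps)
  show ?thesis
    using billiard w unfolding periodic_billiard_def tangent on_line diff cross2_mult_both
    by (simp add: zero_less_mult_iff)
qed

lemma ellipse_similarity_preimage:
  assumes "cmod w = 1"
  shows "(\<lambda>z. c + w * z) -` ellipse (c + w * F1) (c + w * F2) s = ellipse F1 F2 s"
proof -
  have "dist (c + w * z) (c + w * F) = dist z F" for z F
    using assms by (simp add: dist_norm norm_mult flip: right_diff_distrib)
  then show ?thesis unfolding ellipse_def by auto
qed

lemma foci_normal_form:
  obtains c w where "cmod w = 1" "F1 = c + w * of_real (dist F1 F2 / 2)"
    "F2 = c + w * of_real (- (dist F1 F2 / 2))"
proof (cases "F1 = F2")
  case True
  then show ?thesis using that[of 1 F1] by simp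
next
  case False
  define w where "w = (F1 - F2) / of_real (dist F1 F2)"
  have "cmod w = 1" using False unfolding w_def by (simp add: norm_divide dist_norm)
  moreover have half: "w * of_real (dist F1 F2 / 2) = (F1 - F2) / 2"
    using False unfolding w_def by (simp add: field_simps)
  ultimately show ?thesis
    by (intro that[of w "(F1 + F2) / 2"]) (simp_all only: of_real_minus mult_minus_right half, simp_all add: field_simps)
qed

lemma focal_radius:
  fixes f s x y :: real
  assumes "\<bar>f\<bar> < s" and conic: "x^2 / s^2 + y^2 / (s^2 - f^2) = 1"
  shows "sqrt ((x - f)^2 + y^2) = s - f * x / s"
proof -
  have s: "s > 0" using assms(1) by linarith
  have "f^2 < s^2" using power_strict_mono[OF assms(1) abs_ge_zero, of 2] by simp
  then have sf: "s^2 - f^2 > 0" by simp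
  have y: "y^2 = (s^2 - f^2) * (1 - x^2 / s^2)"
    using conic sf by (simp add: field_simps)
  have "0 \<le> y^2 / (s^2 - f^2)" using sf by simp
  then have "x^2 / s^2 \<le> 1" using conic by linarith
  then have "x^2 \<le> s^2" using s by simp
  then have "\<bar>x\<bar> \<le> s" using s by (metis abs_le_square_iff abs_of_pos)
  then have "\<bar>f * x\<bar> \<le> \<bar>f\<bar> * s" by (simp add: abs_mult mult_left_mono)
  also have "\<dots> \<le> s * s" using assms(1) s by simp
  finally have nonneg: "s - f * x / s \<ge> 0" using s by (simp add: field_simps abs_le_iff)
  have "(x - f)^2 + y^2 = (s - f * x / s)^2"
    unfolding y using s by (simp add: field_simps power2_eq_square)
  then show ?thesis using nonneg by simp
qed

lemma focal_sum_iff_conic: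
  fixes f s x y :: real
  assumes "\<bar>f\<bar> < s"
  shows "sqrt ((x - f)^2 + y^2) + sqrt ((x + f)^2 + y^2) = 2 * s \<longleftrightarrow>
    x^2 / s^2 + y^2 / (s^2 - f^2) = 1"
proof
  have s: "s > 0" using assms by linarith
  have "f^2 < s^2" using power_strict_mono[OF assms abs_ge_zero, of 2] by simp
  then have sf: "s^2 - f^2 > 0" by simp
  define r1 r2 where "r1 = sqrt ((x - f)^2 + y^2)" and "r2 = sqrt ((x + f)^2 + y^2)"
  assume sum: "r1 + r2 = 2 * s"
  have "(r2 - r1) * (r2 + r1) = r2^2 - r1^2" by (simp add: algebra_simps power2_eq_square)
  also have "\<dots> = 4 * f * x" unfolding r1_def r2_def by simp (simp add: algebra_simps power2_eq_square)
  finally have "(r2 - r1) * (r2 + r1) = 4 * f * x" .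
  moreover have "r2 = 2 * s - r1" using sum by simp
  ultimately have "(s - r1) * s = f * x" by (simp add: algebra_simps)
  then have "s^2 - f * x = s * r1" by (simp add: algebra_simps power2_eq_square)
  then have "(s^2 - f * x)^2 = s^2 * ((x - f)^2 + y^2)"
    unfolding r1_def by (simp add: power_mult_distrib)
  then have "x^2 * (s^2 - f^2) + y^2 * s^2 = s^2 * (s^2 - f^2)"
    by (simp add: algebra_simps power2_eq_square)
  moreover have "x^2 / s^2 + y^2 / (s^2 - f^2) = (x^2 * (s^2 - f^2) + y^2 * s^2) / (s^2 * (s^2 - f^2))"
    using s sf by (simp add: field_simps)
  ultimately show "x^2 / s^2 + y^2 / (s^2 - f^2) = 1" using s sf by simp
next
  assume conic: "x^2 / s^2 + y^2 / (s^2 - f^2) = 1"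
  then have "sqrt ((x - (- f))^2 + y^2) = s - (- f) * x / s"
    using focal_radius[of "- f" s x y] assms by simp
  then show "sqrt ((x - f)^2 + y^2) + sqrt ((x + f)^2 + y^2) = 2 * s"
    using focal_radius[OF assms conic] by simp
qed

lemma ellipse_real_foci:
  assumes "0 \<le> f" "f < s"
  shows "ellipse (of_real f) (- of_real f) s = {z. (Re z)^2 / s^2 + (Im z)^2 / (s^2 - f^2) = 1}"
proof -
  have "dist z (of_real f) + dist z (- of_real f)
      = sqrt ((Re z - f)^2 + (Im z)^2) + sqrt ((Re z + f)^2 + (Im z)^2)" for z
    by (simp add: dist_norm cmod_def)
  then show ?thesis
    unfolding ellipse_def using focal_sum_iff_conic[of f s] assms by auto
qed

lemma cross2_cis: "cross2 (cis a) (cis b) = sin (b - a)"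
  unfolding cross2_def by (simp add: sin_diff)

lemma sin_2arctan: "sin (2 * arctan r) = 2 * r / (1 + r^2)"
proof -
  have "sin (2 * arctan r) = 2 * sin (arctan r) * cos (arctan r)" by (rule sin_double)
  also have "\<dots> = 2 * r / (1 + r^2)"
    by (simp add: cos_arctan sin_arctan add_pos_nonneg)
  finally show ?thesis .
qed

lemma one_plus_i_tan:
  assumes "cos b \<noteq> 0"
  shows "1 + \<i> * of_real (tan b) = cis b / of_real (cos b)"
  using assms by (simp add: complex_eq_iff tan_def)

lemma tangent_line_unit_circleE:
  assumes "tangent_line (sphere 0 1) X Y"
  obtains s r r' :: real
  where "X = cis s * (1 + \<i> * of_real r)" "Y = cis s * (1 + \<i> * of_real r')" "r \<noteq> r'"
proof -
  from assms obtain Z where XY: "X \<noteq> Y" and Z: "cmod Z = 1" "on_line X Y Z"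
    and uniq: "\<And>Z'. cmod Z' = 1 \<Longrightarrow> on_line X Y Z' \<Longrightarrow> Z' = Z"
    unfolding tangent_line_def by auto
  obtain t0 where Zt: "Z = X + of_real t0 * (Y - X)" using Z(2) unfolding on_line_def by auto
  define d where "d = Y - X"
  have d: "d \<noteq> 0" using XY unfolding d_def by simp
  \<comment> \<open>the second intersection of the line with the circle is Z + \<tau> d; it must coincide with Z\<close>
  define \<tau> where "\<tau> = - 2 * Re (cnj Z * d) / (cmod d)^2"
  have "(cmod (Z + of_real \<tau> * d))^2 = (cmod Z)^2 + \<tau> * (2 * Re (cnj Z * d) + \<tau> * (cmod d)^2)"
    unfolding cmod_power2 by (simp add: algebra_simps power2_eq_square)
  also have "2 * Re (cnj Z * d) + \<tau> * (cmod d)^2 = 0" using d unfolding \<tau>_def by simp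
  finally have "cmod (Z + of_real \<tau> * d) = 1"
    using Z(1) norm_ge_zero[of "Z + of_real \<tau> * d"] by (auto simp: power2_eq_1_iff)
  moreover have "on_line X Y (Z + of_real \<tau> * d)"
    unfolding on_line_def Zt d_def by (rule exI[of _ "t0 + \<tau>"]) (simp add: algebra_simps)
  ultimately have "Z + of_real \<tau> * d = Z" by (rule uniq)
  then have "\<tau> = 0" using d by simp
  then have "Re (cnj Z * d) = 0" using d unfolding \<tau>_def by (simp only: divide_eq_0_iff) simp
  define \<kappa> where "\<kappa> = Im (cnj Z * d)"
  have "cnj Z * d = \<i> * of_real \<kappa>"
    using \<open>Re (cnj Z * d) = 0\<close> unfolding \<kappa>_def by (simp add: complex_eq_iff)
  then have dZ: "d = Z * (\<i> * of_real \<kappa>)"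
    using Z(1) by (metis complex_norm_square mult.assoc mult_1 of_real_1 power_one)
  have X: "X = Z - of_real t0 * d" and Y: "Y = X + d" using Zt unfolding d_def by simp_all
  have "Z \<noteq> 0" using Z(1) by auto
  then have cisZ: "cis (Arg Z) = Z" using Z(1) by (simp add: cis_Arg sgn_div_norm)
  show ?thesis
  proof (rule that[of "Arg Z" "- t0 * \<kappa>" "(1 - t0) * \<kappa>"])
    show "X = cis (Arg Z) * (1 + \<i> * of_real (- t0 * \<kappa>))"
      unfolding cisZ X dZ by (simp add: algebra_simps)
    show "Y = cis (Arg Z) * (1 + \<i> * of_real ((1 - t0) * \<kappa>))"
      unfolding cisZ Y X dZ by (simp add: algebra_simps)
    show "- t0 * \<kappa> \<noteq> (1 - t0) * \<kappa>"
      using d dZ by (auto simp: algebra_simps)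
  qed
qed

section \<open>Lifts of circle maps\<close>

lemma cis_eq_iff_int: "cis a = cis b \<longleftrightarrow> (\<exists>m::int. a = b + of_int m * (2 * pi))"
  using sin_cos_eq_iff[of a b] by (auto simp: complex_eq_iff mult_ac)

lemma add_int_mult_equivariant:
  fixes F :: "real \<Rightarrow> real"
  assumes "\<And>x. F (x + c) = F x + c"
  shows "F (x + of_int m * c) = F x + of_int m * c"
proof (induction m rule: int_induct[of _ 0])
  case (step1 i)
  then show ?case using assms[of "x + of_int i * c"] by (simp add: algebra_simps)
next
  case (step2 i)
  then show ?case using assms[of "x + of_int (i - 1) * c"] by (simp add: algebra_simps)
qed simp

lemma funpow_half_period:
  fixes F :: "real \<Rightarrow> real"
  assumes mono: "strict_mono F" and shift: "\<And>x. F (x + c) = F x + c"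
    and period: "(F ^^ (2 * n)) x = x + of_int (2 * m) * c"
  shows "(F ^^ n) x = x + of_int m * c"
proof -
  define G where "G = F ^^ n"
  have G_mono: "strict_mono G"
    unfolding G_def using mono by (induction n) (simp_all add: strict_mono_def)
  have "G (y + c) = G y + c" for y
    unfolding G_def by (induction n) (simp_all add: shift)
  then have G_shift: "G (y + of_int m * c) = G y + of_int m * c" for y
    by (rule add_int_mult_equivariant)
  have "F ^^ (2 * n) = G \<circ> G"
    unfolding G_def mult_2 by (rule funpow_add)
  then have GG: "G (G x) = x + 2 * (of_int m * c)"
    using period by simp
  show ?thesis
  proof (rule ccontr)
    assume "(F ^^ n) x \<noteq> x + of_int m * c"
    then consider "G x < x + of_int m * c" | "x + of_int m * c < G x"
      unfolding G_def by linarith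
    then show False
    proof cases
      case 1
      then have "G (G x) < G (x + of_int m * c)" by (rule strict_monoD[OF G_mono])
      then have "x + 2 * (of_int m * c) < G x + of_int m * c" using GG G_shift[of x] by simp
      then show False using 1 by linarith
    next
      case 2
      then have "G (x + of_int m * c) < G (G x)" by (rule strict_monoD[OF G_mono])
      then have "G x + of_int m * c < x + 2 * (of_int m * c)" using GG G_shift[of x] by simp
      then show False using 2 by linarith
    qed
  qed
qed

section \<open>Tangents to the caustic\<close>

lemma sin_cos_convex_combination:
  fixes \<alpha> \<beta> :: real
  assumes "0 < \<alpha>" "\<alpha> < 1" "0 < \<beta>" "\<beta> < 1"
  shows "0 < \<alpha> * (sin s)^2 + \<beta> * (cos s)^2" "\<alpha> * (sin s)^2 + \<beta> * (cos s)^2 < 1"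
proof -
  have "min \<alpha> \<beta> * ((sin s)^2 + (cos s)^2) \<le> \<alpha> * (sin s)^2 + \<beta> * (cos s)^2"
    unfolding distrib_left by (intro add_mono mult_right_mono) auto
  then show "0 < \<alpha> * (sin s)^2 + \<beta> * (cos s)^2" using assms by simp
  have "\<alpha> * (sin s)^2 + \<beta> * (cos s)^2 \<le> max \<alpha> \<beta> * ((sin s)^2 + (cos s)^2)"
    unfolding distrib_left by (intro add_mono mult_right_mono) auto
  then show "\<alpha> * (sin s)^2 + \<beta> * (cos s)^2 < 1" using assms by simp
qed

locale nested_ellipses =
  fixes A B a2 b2 :: real
  assumes A_pos: "0 < A" and B_pos: "0 < B" and A_less: "A < a2" and B_less: "B < b2"
begin

definition caustic :: "complex set" where
  "caustic = {z. (Re z)^2 / A + (Im z)^2 / B = 1}"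

definition outer_level :: "complex \<Rightarrow> real" where
  "outer_level z = (Re z)^2 / a2 + (Im z)^2 / b2"

definition stretch :: "complex \<Rightarrow> complex" where
  "stretch w = Complex (sqrt A * Re w) (sqrt B * Im w)"

text \<open>The stretch maps the unit circle onto the caustic, so \<open>tangent_pt s\<close> parametrises the
  tangent to the caustic at \<open>stretch (cis s)\<close>.\<close>

definition tangent_pt :: "real \<Rightarrow> real \<Rightarrow> complex" where
  "tangent_pt s r = stretch (cis s * (1 + \<i> * of_real r))"

lemma linear_stretch: "linear stretch"
  by (rule linearI) (simp_all add: stretch_def complex_eq_iff algebra_simps)

lemma stretch_eq_iff: "stretch u = stretch v \<longleftrightarrow> u = v"
  using A_pos B_pos by (simp add: stretch_def complex_eq_iff)

lemma bij_stretch: "bij stretch"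
proof (rule bijI)
  show "inj stretch" by (simp add: inj_def stretch_eq_iff)
  have "stretch (Complex (Re z / sqrt A) (Im z / sqrt B)) = z" for z
    using A_pos B_pos by (simp add: stretch_def complex_eq_iff)
  then show "surj stretch" by (metis surj_def)
qed

lemma stretch_preimage_caustic: "stretch -` caustic = sphere 0 1"
  using A_pos B_pos
  by (auto simp: caustic_def stretch_def power_mult_distrib cmod_def power2_eq_1_iff)

lemma cross2_stretch: "cross2 (stretch u) (stretch v) = sqrt A * sqrt B * cross2 u v"
  by (simp add: cross2_def stretch_def algebra_simps)

lemma stretch_scale: "stretch (of_real c * w) = of_real c * stretch w"
  by (simp add: stretch_def complex_eq_iff)

lemma tangent_pt_diff: "tangent_pt s r' - tangent_pt s r = of_real (r' - r) * stretch (\<i> * cis s)"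
proof -
  have "cis s * (1 + \<i> * of_real r') - cis s * (1 + \<i> * of_real r) = of_real (r' - r) * (\<i> * cis s)"
    by (simp add: algebra_simps)
  then have "tangent_pt s r' - tangent_pt s r = stretch (of_real (r' - r) * (\<i> * cis s))"
    unfolding tangent_pt_def linear_diff[OF linear_stretch, symmetric] by simp
  then show ?thesis by (simp only: stretch_scale)
qed

lemma tangent_line_causticE:
  assumes "tangent_line caustic X Y"
  obtains s r r' where "X = tangent_pt s r" "Y = tangent_pt s r'" "r \<noteq> r'"
proof -
  obtain X' Y' where "X = stretch X'" "Y = stretch Y'" using bij_stretch by (metis bij_pointE)
  then have "tangent_line (sphere 0 1) X' Y'"
    using assms tangent_line_affine_image_iff[OF linear_stretch bij_stretch, of caustic 0]
    by (simp add: stretch_preimage_caustic)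
  then show ?thesis
    by (rule tangent_line_unit_circleE) (use that \<open>X = _\<close> \<open>Y = _\<close> in \<open>auto simp: tangent_pt_def\<close>)
qed

lemma tangent_pt_swap:
  assumes "cos b \<noteq> 0"
  shows "tangent_pt s (tan b) = tangent_pt (s + 2 * b) (- tan b)"
proof -
  have "cis s * (1 + \<i> * of_real (tan b)) = cis (s + b) / of_real (cos b)"
    unfolding one_plus_i_tan[OF assms] by (simp add: cis_mult)
  moreover have "cis (s + 2 * b) * (1 + \<i> * of_real (- tan b)) = cis (s + b) / of_real (cos b)"
    using one_plus_i_tan[of "- b"] assms by (simp add: cis_mult add.commute)
  ultimately show ?thesis unfolding tangent_pt_def by simp
qed

text \<open>The two tangents through \<open>tangent_pt s r\<close> touch the caustic at the parameters \<open>s\<close> and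
  \<open>s + 2 arctan r\<close>.\<close>

lemma tangent_pt_eq_cases:
  assumes "tangent_pt s r = tangent_pt s' m"
  shows "m = r \<and> cis s' = cis s \<or> m = - r \<and> cis s' = cis (s + 2 * arctan r)"
proof -
  have eq: "cis s * (1 + \<i> * of_real r) = cis s' * (1 + \<i> * of_real m)"
    using assms unfolding tangent_pt_def stretch_eq_iff .
  have "cmod (1 + \<i> * of_real r) = cmod (1 + \<i> * of_real m)"
    using arg_cong[OF eq, of cmod] by (simp add: norm_mult)
  then have "m^2 = r^2" by (simp add: cmod_def)
  then consider "m = r" | "m = - r" by (metis power2_eq_iff)
  then show ?thesis
  proof cases
    case 1
    have "1 + \<i> * of_real r \<noteq> 0" by (simp add: complex_eq_iff)
    then show ?thesis using eq 1 by simp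
  next
    case 2
    have "tangent_pt s' (- r) = tangent_pt (s + 2 * arctan r) (- r)"
      using assms 2 tangent_pt_swap[of "arctan r" s] by (simp add: tan_arctan)
    moreover have "1 + \<i> * of_real (- r) \<noteq> 0" by (simp add: complex_eq_iff)
    ultimately show ?thesis using 2 unfolding tangent_pt_def stretch_eq_iff by simp
  qed
qed

lemma tangent_pt_eq:
  "tangent_pt s r = Complex (sqrt A * (cos s - r * sin s)) (sqrt B * (sin s + r * cos s))"
  by (simp add: tangent_pt_def stretch_def)

lemma cross2_tangent_pt_diff:
  "cross2 (tangent_pt s r1 - tangent_pt s r0) (tangent_pt s' m1 - tangent_pt s' m0) =
    sqrt A * sqrt B * ((r1 - r0) * (m1 - m0) * cross2 (cis s) (cis s'))"
  unfolding tangent_pt_diff stretch_scale[symmetric] cross2_stretch by (simp add: cross2_def algebra_simps)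

lemma cross2_tangent_pt_chord:
  "cross2 (tangent_pt s t) (tangent_pt s r' - tangent_pt s r) = sqrt A * sqrt B * (r' - r)"
proof -
  have "cross2 (cis s * (1 + \<i> * of_real t)) (of_real (r' - r) * (\<i> * cis s)) = r' - r"
    unfolding cross2_def by (simp, use sin_cos_squared_add[of s] in algebra)
  then show ?thesis
    unfolding tangent_pt_diff stretch_scale[symmetric] unfolding tangent_pt_def cross2_stretch
    by simp
qed


definition qa :: "real \<Rightarrow> real" where
  "qa s = A / a2 * (sin s)^2 + B / b2 * (cos s)^2"

definition qb :: "real \<Rightarrow> real" where
  "qb s = 2 * (B / b2 - A / a2) * sin s * cos s"

definition qc :: "real \<Rightarrow> real" where
  "qc s = A / a2 * (cos s)^2 + B / b2 * (sin s)^2 - 1"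

definition forward_root :: "real \<Rightarrow> real" where
  "forward_root s = (- qb s + sqrt ((qb s)^2 - 4 * qa s * qc s)) / (2 * qa s)"

definition backward_root :: "real \<Rightarrow> real" where
  "backward_root s = (- qb s - sqrt ((qb s)^2 - 4 * qa s * qc s)) / (2 * qa s)"

lemma outer_level_tangent_pt: "outer_level (tangent_pt s r) = 1 + (qa s * r^2 + qb s * r + qc s)"
proof -
  have "outer_level (tangent_pt s r) = A / a2 * (cos s - r * sin s)^2 + B / b2 * (sin s + r * cos s)^2"
    unfolding outer_level_def tangent_pt_eq complex.sel power_mult_distrib using A_pos B_pos by simp
  also have "\<dots> = 1 + (qa s * r^2 + qb s * r + qc s)"
    unfolding qa_def qb_def qc_def
    by (simp add: algebra_simps power2_eq_square)
  finally show ?thesis .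
qed

lemma qa_pos: "0 < qa s"
  unfolding qa_def
  using A_pos B_pos A_less B_less by (intro sin_cos_convex_combination(1)) auto

text \<open>Since \<open>qc s = outer_level (tangent_pt s 0) - 1\<close>, this says that the caustic lies inside the
  outer ellipse.\<close>

lemma qc_neg: "qc s < 0"
  unfolding qc_def
  using sin_cos_convex_combination(2)[of "B / b2" "A / a2" s] A_pos B_pos A_less B_less
  by (simp add: add.commute)

lemma qb_sq_less_discriminant: "(qb s)^2 < (qb s)^2 - 4 * qa s * qc s"
  using qa_pos[of s] qc_neg[of s] by (simp add: mult_pos_neg)

lemma forward_backward_root_sign: "backward_root s < 0" "0 < forward_root s"
proof -
  have "\<bar>qb s\<bar> < sqrt ((qb s)^2 - 4 * qa s * qc s)"
    using qb_sq_less_discriminant by (metis real_sqrt_abs real_sqrt_less_mono)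
  then show "backward_root s < 0" "0 < forward_root s"
    unfolding forward_root_def backward_root_def using qa_pos[of s] by (simp_all add: divide_simps)
qed

lemma outer_level_tangent_pt_factor:
  "outer_level (tangent_pt s r) = 1 + qa s * (r - forward_root s) * (r - backward_root s)"
proof -
  define a b c where "a = qa s" and "b = qb s" and "c = qc s"
  define d where "d = sqrt (b^2 - 4 * a * c)"
  have a: "a > 0" using qa_pos unfolding a_def .
  have "b^2 - 4 * a * c \<ge> 0"
    using qb_sq_less_discriminant[of s] zero_le_power2[of b] unfolding a_def b_def c_def by linarith
  then have d: "d^2 = b^2 - 4 * a * c" unfolding d_def by simp
  have "a * (r - (- b + d) / (2 * a)) * (r - (- b - d) / (2 * a)) = a * r^2 + b * r + (b^2 - d^2) / (4 * a)"
    using a by (simp add: field_simps power2_eq_square)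
  also have "\<dots> = a * r^2 + b * r + c" using a unfolding d by simp
  finally show ?thesis
    unfolding outer_level_tangent_pt forward_root_def backward_root_def
    by (simp add: a_def b_def c_def d_def)
qed

lemma tangent_pt_on_outer_iff:
  "outer_level (tangent_pt s r) = 1 \<longleftrightarrow> r = forward_root s \<or> r = backward_root s"
  using qa_pos[of s] by (simp add: outer_level_tangent_pt_factor)

lemma tangent_pt_inside_outer_iff:
  "outer_level (tangent_pt s r) < 1 \<longleftrightarrow> backward_root s < r \<and> r < forward_root s"
proof -
  have "qa s * ((r - forward_root s) * (r - backward_root s)) < 0 \<longleftrightarrow>
      (r - forward_root s) * (r - backward_root s) < 0"
    using qa_pos[of s] by (simp add: mult_less_0_iff)
  then show ?thesis
    using forward_backward_root_sign[of s]
    by (auto simp: outer_level_tangent_pt_factor mult.assoc mult_less_0_iff)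
qed

lemma tangent_pt_on_outer_distinct:
  assumes "outer_level (tangent_pt s r) = 1" "outer_level (tangent_pt s r') = 1" "r \<noteq> r'"
  shows "r * r' < 0"
  using assms forward_backward_root_sign[of s]
  by (auto simp: tangent_pt_on_outer_iff mult_less_0_iff)

lemma forward_root_add_pi: "forward_root (s + pi) = forward_root s"
  by (simp add: forward_root_def qa_def qb_def qc_def)

lemma tangent_pt_vertex:
  assumes X: "tangent_pt s r1 = tangent_pt s' m0"
    and r: "r0 * r1 < 0" and m: "m0 * m1 < 0"
    and turn: "0 < cross2 (tangent_pt s r1 - tangent_pt s r0) (tangent_pt s' m1 - tangent_pt s' m0)"
  shows "0 < r1 \<and> m0 = - r1 \<and> cis s' = cis (s + 2 * arctan r1)"
proof -
  have AB: "0 < sqrt A * sqrt B" using A_pos B_pos by simp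
  have turn': "0 < (r1 - r0) * (m1 - m0) * cross2 (cis s) (cis s')"
    using turn AB unfolding cross2_tangent_pt_diff by (rule zero_less_mult_pos)
  have "cross2 (cis s) (cis s') \<noteq> 0" using turn' by auto
  then have "cis s' \<noteq> cis s" by (metis cross2_cis diff_self sin_zero)
  then have "m0 = - r1 \<and> cis s' = cis (s + 2 * arctan r1)"
    using tangent_pt_eq_cases[OF X] by auto
  moreover have "0 < r1"
  proof (rule ccontr)
    assume "\<not> 0 < r1"
    then have "r1 < 0" "0 < r0" using r by (auto simp: mult_less_0_iff)
    moreover have "m1 < 0"
      using m \<open>m0 = - r1 \<and> _\<close> \<open>r1 < 0\<close> by (auto simp: mult_less_0_iff zero_less_mult_iff)
    ultimately have "0 < (r1 - r0) * (m1 - m0)" using \<open>m0 = - r1 \<and> _\<close> by (simp add: mult_neg_neg)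
    moreover have "cross2 (cis s) (cis s') = 2 * r1 / (1 + r1^2)"
      using \<open>m0 = - r1 \<and> _\<close> by (simp add: cross2_cis sin_2arctan)
    then have "cross2 (cis s) (cis s') < 0"
      using \<open>r1 < 0\<close> by (simp add: divide_neg_pos add_pos_nonneg)
    ultimately show False using turn' mult_pos_neg by fastforce
  qed
  ultimately show ?thesis by blast
qed

definition tangency_map :: "real \<Rightarrow> real" where
  "tangency_map s = s + 2 * arctan (forward_root s)"

lemma tangency_map_add_pi: "tangency_map (s + pi) = tangency_map s + pi"
  by (simp add: tangency_map_def forward_root_add_pi)

lemma less_tangency_map: "s < tangency_map s"
  using forward_backward_root_sign(2)[of s] arctan_less_iff[of 0 "forward_root s"]
  by (simp add: tangency_map_def)

lemma cis_tangency_map_cong: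
  assumes "cis a = cis b"
  shows "cis (tangency_map a) = cis (tangency_map b)"
proof -
  obtain m :: int where "a = b + of_int (2 * m) * pi"
    using assms by (auto simp: cis_eq_iff_int)
  then have "tangency_map a = tangency_map b + of_int m * (2 * pi)"
    using add_int_mult_equivariant[of tangency_map pi b "2 * m", OF tangency_map_add_pi] by simp
  then show ?thesis by (auto simp: cis_eq_iff_int)
qed

lemma strict_mono_tangency_map: "strict_mono tangency_map"
proof (rule strict_monoI)
  fix s t :: real
  assume "s < t"
  show "tangency_map s < tangency_map t"
  proof (cases "tangency_map s \<le> t")
    case True
    then show ?thesis using less_tangency_map[of t] by simp
  next
    case False
    \<comment> \<open>The tangents at \<open>s\<close> and \<open>t\<close> meet the tangent at \<open>u\<close> in the point \<open>tangent_pt s r\<close>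
      of the outer ellipse and in \<open>tangent_pt t k\<close>, which lies between that point and the caustic,
      hence inside the outer ellipse; so the forward root at \<open>t\<close> exceeds \<open>k\<close>.\<close>
    define u r where "u = tangency_map s" and "r = forward_root s"
    define \<alpha> where "\<alpha> = (u - t) / 2"
    define k where "k = tan \<alpha>"
    have r: "0 < r" using forward_backward_root_sign(2) unfolding r_def .
    have "0 < \<alpha>" "\<alpha> < arctan r"
      using False \<open>s < t\<close> unfolding \<alpha>_def u_def r_def tangency_map_def by simp_all
    moreover have "arctan r < pi / 2" by (rule arctan_ubound)
    ultimately have cos_\<alpha>: "cos \<alpha> \<noteq> 0" and k: "arctan k = \<alpha>"
      unfolding k_def by (simp_all add: cos_gt_zero_pi[THEN less_imp_neq, symmetric] arctan_tan)
    then have "0 < k" "k < r"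
      using \<open>0 < \<alpha>\<close> \<open>\<alpha> < arctan r\<close> arctan_less_iff[of 0 k] arctan_less_iff[of k r] by simp_all
    have "tangent_pt s r = tangent_pt u (- r)"
      using tangent_pt_swap[of "arctan r" s] unfolding u_def r_def tangency_map_def
      by (simp add: tan_arctan)
    moreover have "outer_level (tangent_pt s r) = 1"
      unfolding r_def tangent_pt_on_outer_iff by simp
    ultimately have "outer_level (tangent_pt u (- r)) = 1" by simp
    then have "- r = backward_root u"
      using r forward_backward_root_sign(2)[of u] unfolding tangent_pt_on_outer_iff by auto
    then have "outer_level (tangent_pt u (- k)) < 1"
      using \<open>0 < k\<close> \<open>k < r\<close> forward_backward_root_sign(2)[of u]
      by (simp add: tangent_pt_inside_outer_iff)
    moreover have "t + 2 * \<alpha> = u" unfolding \<alpha>_def by (simp add: field_simps)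
    then have "tangent_pt t k = tangent_pt u (- k)"
      using tangent_pt_swap[OF cos_\<alpha>, of t] unfolding k_def by simp
    ultimately have "outer_level (tangent_pt t k) < 1" by simp
    then have "k < forward_root t" by (simp add: tangent_pt_inside_outer_iff)
    then have "\<alpha> < arctan (forward_root t)"
      using k arctan_less_iff by metis
    then show ?thesis unfolding \<alpha>_def u_def tangency_map_def[of t] by simp
  qed
qed

definition tangent_dist :: "real \<Rightarrow> real" where
  "tangent_dist s = sqrt A * sqrt B / cmod (stretch (\<i> * cis s))"

lemma origin_line_dist_tangent_pt:
  assumes "r0 < r1"
  shows "origin_line_dist (tangent_pt s r0) (tangent_pt s r1) = tangent_dist s"
proof -
  have "stretch (\<i> * cis s) \<noteq> 0"
    using stretch_eq_iff[of _ 0] by (simp add: linear_0[OF linear_stretch])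
  then show ?thesis
    using assms cross2_tangent_pt_chord[of s r0 r1 r0]
    unfolding origin_line_dist_def tangent_dist_def tangent_pt_diff
    by (simp add: norm_mult flip: of_real_diff)
qed

lemma tangent_dist_add_int_pi: "tangent_dist (s + of_int m * pi) = tangent_dist s"
proof -
  have "sin (of_int m * pi) = 0" by (auto simp: sin_zero_iff_int2)
  then have c: "\<bar>cos (of_int m * pi)\<bar> = 1" "cis (of_int m * pi) = of_real (cos (of_int m * pi))"
    using sin_cos_squared_add[of "of_int m * pi"] by (simp_all add: complex_eq_iff abs_square_eq_1)
  have "\<i> * cis (s + of_int m * pi) = of_real (cos (of_int m * pi)) * (\<i> * cis s)"
    unfolding cis_mult[symmetric] c(2) by simp
  then show ?thesis
    unfolding tangent_dist_def using c(1) by (simp only: stretch_scale norm_mult norm_of_real)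
qed

lemma tangent_dist_cis_cong: "cis a = cis b \<Longrightarrow> tangent_dist a = tangent_dist b"
  by (simp add: tangent_dist_def)

lemma cis_eq_of_tangent_pt_diff_eq:
  assumes "r0 < r1" "m0 < m1"
    and "tangent_pt s r1 - tangent_pt s r0 = tangent_pt s' m1 - tangent_pt s' m0"
  shows "cis s = cis s'"
proof -
  have "stretch (of_real (r1 - r0) * (\<i> * cis s)) = stretch (of_real (m1 - m0) * (\<i> * cis s'))"
    using assms(3) unfolding tangent_pt_diff stretch_scale .
  then have eq: "of_real (r1 - r0) * (\<i> * cis s) = of_real (m1 - m0) * (\<i> * cis s')"
    unfolding stretch_eq_iff .
  then have "r1 - r0 = m1 - m0"
    using arg_cong[OF eq, of cmod] assms(1,2) by (simp add: norm_mult flip: of_real_diff)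
  then show ?thesis using eq assms(1) by simp
qed

lemma billiard_sidesE:
  fixes P :: "int \<Rightarrow> complex"
  assumes on_outer: "\<And>j. outer_level (P j) = 1"
    and tangent: "\<And>j. tangent_line caustic (P j) (P (j + 1))"
    and turn: "\<And>j. 0 < cross2 (P j - P (j - 1)) (P (j + 1) - P j)"
  obtains s where "\<And>j. P j = tangent_pt (s j) (backward_root (s j))"
    and "\<And>j. P (j + 1) = tangent_pt (s j) (forward_root (s j))"
    and "\<And>j. cis (s (j + 1)) = cis (tangency_map (s j))"
proof -
  have "\<forall>j. \<exists>s r r'. P j = tangent_pt s r \<and> P (j + 1) = tangent_pt s r' \<and> r \<noteq> r'"
    using tangent_line_causticE[OF tangent] by metis
  then obtain s r0 r1 where P0: "\<And>j. P j = tangent_pt (s j) (r0 j)"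
    and P1: "\<And>j. P (j + 1) = tangent_pt (s j) (r1 j)" and ne: "\<And>j. r0 j \<noteq> r1 j"
    by metis
  have roots: "r0 j * r1 j < 0" for j
    using tangent_pt_on_outer_distinct on_outer P0 P1 ne by metis
  have vertex: "0 < r1 j \<and> cis (s (j + 1)) = cis (s j + 2 * arctan (r1 j))" for j
  proof -
    have "tangent_pt (s j) (r1 j) = tangent_pt (s (j + 1)) (r0 (j + 1))"
      using P0 P1 by metis
    moreover have "0 < cross2 (P (j + 1) - P j) (P (j + 1 + 1) - P (j + 1))"
      using turn[of "j + 1"] by simp
    moreover have "P (j + 1) - P j = tangent_pt (s j) (r1 j) - tangent_pt (s j) (r0 j)"
      by (simp only: P0[of j] P1[of j])
    moreover have "P (j + 1 + 1) - P (j + 1) =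
        tangent_pt (s (j + 1)) (r1 (j + 1)) - tangent_pt (s (j + 1)) (r0 (j + 1))"
      by (simp only: P0[of "j + 1"] P1[of "j + 1"])
    ultimately show ?thesis using tangent_pt_vertex roots by metis
  qed
  have r1: "r1 j = forward_root (s j)" for j
    using on_outer[of "j + 1"] vertex[of j] forward_backward_root_sign(1)[of "s j"]
    unfolding P1 tangent_pt_on_outer_iff by auto
  moreover have "r0 j = backward_root (s j)" for j
    using on_outer[of j] ne[of j] unfolding P0 tangent_pt_on_outer_iff r1 by auto
  ultimately show ?thesis
    using that P0 P1 vertex unfolding tangency_map_def by metis
qed

lemma cis_eq_tangency_map_funpow:
  assumes "\<And>j. cis (s (j + 1)) = cis (tangency_map (s j))"
  shows "cis (s (int k)) = cis ((tangency_map ^^ k) (s 0))"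
proof (induction k)
  case (Suc k)
  have "cis (s (int (Suc k))) = cis (tangency_map (s (int k)))"
    using assms[of "int k"] by (simp add: add.commute)
  also have "\<dots> = cis (tangency_map ((tangency_map ^^ k) (s 0)))"
    by (rule cis_tangency_map_cong[OF Suc.IH])
  finally show ?case by simp
qed simp

lemma origin_line_dist_opposite_sides:
  assumes P0: "\<And>j. P j = tangent_pt (s j) (backward_root (s j))"
    and P1: "\<And>j. P (j + 1) = tangent_pt (s j) (forward_root (s j))"
    and next_side: "\<And>j. cis (s (j + 1)) = cis (tangency_map (s j))"
    and period: "\<And>j. P (j + int (2 * n)) = P j"
  shows "origin_line_dist (P (int n)) (P (int n + 1)) = origin_line_dist (P 0) (P 1)"
proof -
  have bf: "backward_root t < forward_root t" for t
    using forward_backward_root_sign[of t] by simp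
  have dist: "origin_line_dist (P j) (P (j + 1)) = tangent_dist (s j)" for j
    by (simp only: P0[of j] P1[of j]) (rule origin_line_dist_tangent_pt[OF bf])
  have side: "P (j + 1) - P j = tangent_pt (s j) (forward_root (s j)) - tangent_pt (s j) (backward_root (s j))"
    for j by (simp only: P0[of j] P1[of j])
  note lift = cis_eq_tangency_map_funpow[of s, OF next_side]
  define N where "N = int (2 * n)"
  have "tangent_pt (s N) (forward_root (s N)) - tangent_pt (s N) (backward_root (s N)) = P (N + 1) - P N"
    by (rule side[symmetric])
  also have "\<dots> = P (0 + 1) - P 0"
    using period[of 0] period[of 1] unfolding N_def by (simp add: add.commute)
  also have "\<dots> = tangent_pt (s 0) (forward_root (s 0)) - tangent_pt (s 0) (backward_root (s 0))"
    by (rule side)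
  finally have "cis (s N) = cis (s 0)" by (rule cis_eq_of_tangent_pt_diff_eq[OF bf bf])
  then obtain m :: int where "(tangency_map ^^ (2 * n)) (s 0) = s 0 + of_int (2 * m) * pi"
    unfolding N_def lift cis_eq_iff_int by (auto simp: mult_ac)
  then have "(tangency_map ^^ n) (s 0) = s 0 + of_int m * pi"
    using funpow_half_period strict_mono_tangency_map tangency_map_add_pi by blast
  then have "tangent_dist (s (int n)) = tangent_dist (s 0)"
    using tangent_dist_cis_cong[OF lift] tangent_dist_add_int_pi by simp
  then show ?thesis using dist[of "int n"] dist[of 0] by simp
qed

section \<open>The confocal identity\<close>

lemma outer_level_eq_1_iff: "outer_level z = 1 \<longleftrightarrow> b2 * (Re z)^2 + a2 * (Im z)^2 = a2 * b2"
proof -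
  have "0 < a2" "0 < b2" using A_pos B_pos A_less B_less by auto
  then have "outer_level z = (b2 * (Re z)^2 + a2 * (Im z)^2) / (a2 * b2)"
    by (simp add: outer_level_def field_simps)
  then show ?thesis using \<open>0 < a2\<close> \<open>0 < b2\<close> by (simp add: eq_commute[of "a2 * b2"])
qed

text \<open>The classical tangency criterion: the line \<open>l x + m y = n\<close> touches the caustic iff
  \<open>A l\<^sup>2 + B m\<^sup>2 = n\<^sup>2\<close>; here \<open>(l, m) = (Im v, - Re v)\<close> and \<open>n = cross2 X v\<close>.\<close>

definition tangent_to_caustic :: "complex \<Rightarrow> complex \<Rightarrow> bool" where
  "tangent_to_caustic X v \<longleftrightarrow> (cross2 X v)^2 = B * (Re v)^2 + A * (Im v)^2"

lemma tangent_to_caustic_tangent_pt: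
  "tangent_to_caustic (tangent_pt s t) (tangent_pt s r' - tangent_pt s r)"
proof -
  have d: "tangent_pt s r' - tangent_pt s r = Complex (- ((r' - r) * sqrt A * sin s)) ((r' - r) * sqrt B * cos s)"
    by (simp add: tangent_pt_eq complex_eq_iff algebra_simps)
  have "B * (Re (tangent_pt s r' - tangent_pt s r))^2 + A * (Im (tangent_pt s r' - tangent_pt s r))^2
      = A * B * (r' - r)^2"
    unfolding d using A_pos B_pos
    by (simp add: power_mult_distrib, use sin_cos_squared_add[of s] in algebra)
  then show ?thesis
    unfolding tangent_to_caustic_def cross2_tangent_pt_chord
    using A_pos B_pos by (simp add: power_mult_distrib)
qed

text \<open>Dot and cross product of \<open>v\<close> with the normal \<open>(b2 x, a2 y)\<close> of the outer ellipse
  at \<open>X = (x, y)\<close>.\<close>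

definition normal_dot :: "complex \<Rightarrow> complex \<Rightarrow> real" where
  "normal_dot X v = b2 * Re X * Re v + a2 * Im X * Im v"

definition normal_cross :: "complex \<Rightarrow> complex \<Rightarrow> real" where
  "normal_cross X v = b2 * Re X * Im v - a2 * Im X * Re v"

lemma normal_dot_lagrange:
  "(normal_dot X v)^2 + a2 * b2 * (cross2 X v)^2
    = (b2 * (Re v)^2 + a2 * (Im v)^2) * (b2 * (Re X)^2 + a2 * (Im X)^2)"
  unfolding normal_dot_def cross2_def by algebra

lemma normal_cross_lagrange:
  "(normal_dot X v)^2 + (normal_cross X v)^2 = ((b2 * Re X)^2 + (a2 * Im X)^2) * (cmod v)^2"
  unfolding normal_dot_def normal_cross_def cmod_power2 by algebra

lemma normal_dot_chord_neg:
  assumes "outer_level X = 1" "outer_level (X + v) = 1" "v \<noteq> 0"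
  shows "normal_dot X v < 0"
proof -
  have "2 * normal_dot X v + (b2 * (Re v)^2 + a2 * (Im v)^2) = 0"
    using assms(1,2) unfolding outer_level_eq_1_iff normal_dot_def
    by (simp add: algebra_simps power2_eq_square)
  moreover have "0 < b2 * (Re v)^2 + a2 * (Im v)^2"
    using assms(3) A_pos B_pos A_less B_less
    by (auto simp: complex_eq_iff intro: add_pos_nonneg add_nonneg_pos)
  ultimately show ?thesis by linarith
qed

lemma normal_frame_cross2:
  "((b2 * Re X)^2 + (a2 * Im X)^2) * cross2 v1 v2
    = normal_dot X v1 * normal_cross X v2 - normal_cross X v1 * normal_dot X v2"
  unfolding normal_dot_def normal_cross_def cross2_def by algebra

lemma normal_frame_cross2_point:
  "((b2 * Re X)^2 + (a2 * Im X)^2) * cross2 X v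
    = normal_dot X v * ((a2 - b2) * Re X * Im X) + normal_cross X v * (b2 * (Re X)^2 + a2 * (Im X)^2)"
  unfolding normal_dot_def normal_cross_def cross2_def by algebra

lemma normal_norm_pos:
  assumes "outer_level X = 1"
  shows "0 < (b2 * Re X)^2 + (a2 * Im X)^2"
proof -
  have "X \<noteq> 0" using assms by (auto simp: outer_level_def)
  then show ?thesis
    using A_pos B_pos A_less B_less by (auto simp: complex_eq_iff intro: add_pos_nonneg add_nonneg_pos)
qed

end

lemma alternating_sum_telescope:
  fixes W :: "int \<Rightarrow> real"
  shows "(\<Sum>i=1..int n. (-1) ^ nat i * (W (i - 1) + W i)) = (-1) ^ n * W (int n) - W 0"
proof (induction n)
  case (Suc n)
  have "{1..int (Suc n)} = insert (int n + 1) {1..int n}" by auto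
  then have "(\<Sum>i=1..int (Suc n). (-1) ^ nat i * (W (i - 1) + W i))
      = (-1) ^ Suc n * (W (int n) + W (int n + 1)) + ((-1) ^ n * W (int n) - W 0)"
    using Suc by (simp add: nat_add_distrib)
  then show ?case by (simp add: algebra_simps)
qed simp

locale confocal_ellipses = nested_ellipses +
  assumes confocal: "a2 - A = b2 - B"
begin

lemma normal_dot_chord:
  assumes X: "outer_level X = 1" and "outer_level (X + v) = 1" and "tangent_to_caustic X v"
  shows "normal_dot X v = - sqrt (a2 * b2 * (a2 - A)) * cmod v"
proof (cases "v = 0")
  case False
  have "(normal_dot X v)^2 + a2 * b2 * (B * (Re v)^2 + A * (Im v)^2)
      = (b2 * (Re v)^2 + a2 * (Im v)^2) * (a2 * b2)"
    using normal_dot_lagrange[of X v] assms(1,3)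
    unfolding outer_level_eq_1_iff tangent_to_caustic_def by simp
  then have "(normal_dot X v)^2 = a2 * b2 * ((b2 - B) * (Re v)^2 + (a2 - A) * (Im v)^2)"
    by (simp add: algebra_simps)
  also have "\<dots> = (sqrt (a2 * b2 * (a2 - A)) * cmod v)^2"
    using A_pos B_pos A_less B_less unfolding cmod_power2 power_mult_distrib
    by (simp add: confocal[symmetric] algebra_simps)
  finally have "normal_dot X v = sqrt (a2 * b2 * (a2 - A)) * cmod v \<or>
      normal_dot X v = - (sqrt (a2 * b2 * (a2 - A)) * cmod v)"
    unfolding power2_eq_iff .
  moreover have "0 \<le> sqrt (a2 * b2 * (a2 - A)) * cmod v"
    using A_pos B_pos A_less B_less by simp
  ultimately show ?thesis
    using normal_dot_chord_neg[OF assms(1,2) False] by auto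
qed (simp add: normal_dot_def)

lemma normal_dot_incoming:
  assumes "outer_level X = 1" "outer_level (X - v) = 1" "tangent_to_caustic X v"
  shows "normal_dot X v = sqrt (a2 * b2 * (a2 - A)) * cmod v"
proof -
  have "cross2 X (- v) = - cross2 X v" by (simp add: cross2_def)
  then have "tangent_to_caustic X (- v)" using assms(3) by (simp add: tangent_to_caustic_def)
  then have "normal_dot X (- v) = - sqrt (a2 * b2 * (a2 - A)) * cmod v"
    using normal_dot_chord[OF assms(1)] assms(2) by simp
  then show ?thesis by (simp add: normal_dot_def)
qed

text \<open>The reflection law: the two tangents from a point of the outer ellipse to a confocal
  caustic make equal angles with its normal.\<close>

lemma reflection_law:
  assumes X: "outer_level X = 1" and "outer_level (X - v1) = 1" "outer_level (X + v2) = 1"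
    and "tangent_to_caustic X v1" "tangent_to_caustic X v2" and turn: "0 < cross2 v1 v2"
  shows "normal_cross X v1 / cmod v1 = normal_cross X v2 / cmod v2"
proof -
  define M NN where "M = sqrt (a2 * b2 * (a2 - A))" and "NN = (b2 * Re X)^2 + (a2 * Im X)^2"
  have n: "0 < cmod v1" "0 < cmod v2" using turn by (auto simp: cross2_def)
  have d1: "normal_dot X v1 = M * cmod v1"
    unfolding M_def using assms by (intro normal_dot_incoming)
  have d2: "normal_dot X v2 = - M * cmod v2"
    unfolding M_def using assms by (intro normal_dot_chord)
  have sq: "(normal_cross X v / cmod v)^2 = NN - M^2"
    if "(normal_dot X v)^2 = (M * cmod v)^2" "0 < cmod v" for v
    using normal_cross_lagrange[of X v] that unfolding NN_def[symmetric]
    by (simp add: power_divide power_mult_distrib field_simps)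
  have "0 < NN * cross2 v1 v2" using normal_norm_pos[OF X] turn unfolding NN_def by simp
  also have "NN * cross2 v1 v2
      = M * cmod v1 * cmod v2 * (normal_cross X v1 / cmod v1 + normal_cross X v2 / cmod v2)"
    unfolding NN_def normal_frame_cross2 d1 d2 using n by (simp add: field_simps)
  moreover have "0 < M * cmod v1 * cmod v2"
    using n A_pos B_pos A_less B_less unfolding M_def by simp
  ultimately have "0 < normal_cross X v1 / cmod v1 + normal_cross X v2 / cmod v2"
    using zero_less_mult_pos by metis
  moreover have "(normal_cross X v1 / cmod v1)^2 = (normal_cross X v2 / cmod v2)^2"
    using sq[of v1] sq[of v2] d1 d2 n by (simp add: power_mult_distrib)
  ultimately show ?thesis unfolding power2_eq_iff by auto
qed

lemma exterior_angle_identity: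
  assumes X: "outer_level X = 1" and "outer_level (X - v1) = 1" "outer_level (X + v2) = 1"
    and "tangent_to_caustic X v1" "tangent_to_caustic X v2" and turn: "0 < cross2 v1 v2"
  shows "cross2 v1 v2 / (cmod v1 * cmod v2)
    = sqrt ((a2 - A) / (a2 * b2)) * (cross2 X v1 / cmod v1 + cross2 X v2 / cmod v2)"
proof -
  define M NN where "M = sqrt (a2 * b2 * (a2 - A))" and "NN = (b2 * Re X)^2 + (a2 * Im X)^2"
  define \<beta> where "\<beta> = normal_cross X v1 / cmod v1"
  have n: "0 < cmod v1" "0 < cmod v2" using turn by (auto simp: cross2_def)
  have ab: "0 < a2 * b2" using A_pos B_pos A_less B_less by simp
  have d1: "normal_dot X v1 = M * cmod v1"
    unfolding M_def using assms by (intro normal_dot_incoming)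
  have d2: "normal_dot X v2 = - M * cmod v2"
    unfolding M_def using assms by (intro normal_dot_chord)
  have c1: "normal_cross X v1 = \<beta> * cmod v1" and c2: "normal_cross X v2 = \<beta> * cmod v2"
    using reflection_law[OF assms] n unfolding \<beta>_def by (simp_all add: field_simps)
  have Xe: "b2 * (Re X)^2 + a2 * (Im X)^2 = a2 * b2" using X unfolding outer_level_eq_1_iff .
  have "NN * (cross2 v1 v2 / (cmod v1 * cmod v2)) = 2 * M * \<beta>"
    using n unfolding NN_def divide_inverse mult.assoc[symmetric] normal_frame_cross2 d1 d2 c1 c2
    by (simp add: field_simps)
  also have "\<dots> = sqrt ((a2 - A) / (a2 * b2)) * (2 * \<beta> * (a2 * b2))"
  proof -
    have "sqrt ((a2 - A) / (a2 * b2)) * (a2 * b2) = sqrt ((a2 - A) / (a2 * b2) * (a2 * b2)^2)"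
      using ab by (simp only: real_sqrt_mult real_sqrt_abs abs_of_pos)
    also have "(a2 - A) / (a2 * b2) * (a2 * b2)^2 = a2 * b2 * (a2 - A)"
      using ab by (simp add: power2_eq_square)
    finally show ?thesis unfolding M_def by simp
  qed
  also have "2 * \<beta> * (a2 * b2) = NN * (cross2 X v1 / cmod v1 + cross2 X v2 / cmod v2)"
    using n unfolding NN_def distrib_left times_divide_eq_right normal_frame_cross2_point Xe d1 d2 c1 c2
    by (simp add: field_simps)
  finally have "NN * (cross2 v1 v2 / (cmod v1 * cmod v2))
      = NN * (sqrt ((a2 - A) / (a2 * b2)) * (cross2 X v1 / cmod v1 + cross2 X v2 / cmod v2))"
    by (simp only: mult.left_commute)
  moreover have "NN \<noteq> 0" using normal_norm_pos[OF X] unfolding NN_def by linarith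
  ultimately show ?thesis by (rule mult_left_cancel[THEN iffD1, rotated])
qed

lemma sin_ext_angle_eq_origin_line_dists:
  fixes P :: "int \<Rightarrow> complex"
  assumes on_outer: "\<And>j. outer_level (P j) = 1"
    and P0: "\<And>j. P j = tangent_pt (s j) (backward_root (s j))"
    and P1: "\<And>j. P (j + 1) = tangent_pt (s j) (forward_root (s j))"
    and turn: "\<And>j. 0 < cross2 (P j - P (j - 1)) (P (j + 1) - P j)"
  shows "sin (ext_angle P i) = sqrt ((a2 - A) / (a2 * b2)) *
    (origin_line_dist (P (i - 1)) (P i) + origin_line_dist (P i) (P (i + 1)))"
proof -
  define v1 v2 where "v1 = P i - P (i - 1)" and "v2 = P (i + 1) - P i"
  have turn_i: "0 < cross2 v1 v2" unfolding v1_def v2_def by (rule turn)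
  then have "v1 \<noteq> 0" "v2 \<noteq> 0" by (auto simp: cross2_def)
  then have "sin (ext_angle P i) = cross2 v1 v2 / (cmod v1 * cmod v2)"
    using turn_i unfolding ext_angle_def v1_def[symmetric] v2_def[symmetric] by (simp add: sin_vec_angle)
  also have "\<dots> = sqrt ((a2 - A) / (a2 * b2)) * (cross2 (P i) v1 / cmod v1 + cross2 (P i) v2 / cmod v2)"
  proof (rule exterior_angle_identity[OF on_outer _ _ _ _ turn_i])
    show "outer_level (P i - v1) = 1" "outer_level (P i + v2) = 1"
      unfolding v1_def v2_def using on_outer by simp_all
    have "P (i - 1 + 1) = P i" by simp
    then show "tangent_to_caustic (P i) v1"
      unfolding v1_def using P0[of "i - 1"] P1[of "i - 1"] tangent_to_caustic_tangent_pt by metis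
    show "tangent_to_caustic (P i) v2"
      unfolding v2_def P0[of i] P1[of i] by (rule tangent_to_caustic_tangent_pt)
  qed
  also have "cross2 (P i) v1 = cross2 (P (i - 1)) (P i - P (i - 1))"
    unfolding v1_def by (simp add: cross2_def algebra_simps)
  finally show ?thesis
    unfolding origin_line_dist_def v1_def v2_def .
qed

lemma periodic_billiard_alternating_sums:
  fixes P :: "int \<Rightarrow> complex"
  assumes "periodic_billiard {z. outer_level z = 1} caustic N P"
  shows "(even N \<longrightarrow> (\<Sum>i=1..int N. (-1) ^ nat i * sin (ext_angle P i)) = 0) \<and>
         (4 dvd N \<longrightarrow> (\<Sum>i=1..int N div 2. (-1) ^ nat i * sin (ext_angle P i)) = 0)"
proof -
  have on_outer: "\<And>j. outer_level (P j) = 1"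
    and tangent: "\<And>j. tangent_line caustic (P j) (P (j + 1))"
    and turn: "\<And>j. 0 < cross2 (P j - P (j - 1)) (P (j + 1) - P j)"
    and period: "\<And>j. P (j + int N) = P j"
    using assms unfolding periodic_billiard_def by auto
  obtain s where P0: "\<And>j. P j = tangent_pt (s j) (backward_root (s j))"
    and P1: "\<And>j. P (j + 1) = tangent_pt (s j) (forward_root (s j))"
    and next_side: "\<And>j. cis (s (j + 1)) = cis (tangency_map (s j))"
    using billiard_sidesE[OF on_outer tangent turn] by blast
  define W where "W j = origin_line_dist (P j) (P (j + 1))" for j
  have sum: "(\<Sum>i=1..int n. (-1) ^ nat i * sin (ext_angle P i))
      = sqrt ((a2 - A) / (a2 * b2)) * ((-1) ^ n * W (int n) - W 0)" for n
    unfolding sin_ext_angle_eq_origin_line_dists[OF on_outer P0 P1 turn] W_def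
      mult.left_commute[of "(-1) ^ _"] sum_distrib_left[symmetric]
    using alternating_sum_telescope[of "\<lambda>j. origin_line_dist (P j) (P (j + 1))"] by simp
  have "W (int N) = W 0" using period[of 0] period[of 1] unfolding W_def by (simp add: add.commute)
  moreover have "W (int (N div 2)) = W 0" if "even N"
    using origin_line_dist_opposite_sides[where P = P and s = s and n = "N div 2", OF P0 P1 next_side] period that
    unfolding W_def by simp
  ultimately show ?thesis
    using sum[of N] sum[of "N div 2"] by (auto simp: zdiv_int elim!: dvdE)
qed

end

theorem theorem4:
  fixes F1 F2 :: complex and sc se :: real and N :: nat and P :: "int \<Rightarrow> complex"
  assumes "is_ellipse_param F1 F2 sc"
    and "is_ellipse_param F1 F2 se"
    and "sc < se"
    and "periodic_billiard (ellipse F1 F2 se) (ellipse F1 F2 sc) N P"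
  shows "(even N \<longrightarrow> (\<Sum>i=1..int N. (-1) ^ nat i * sin (ext_angle P i)) = 0) \<and>
         (4 dvd N \<longrightarrow> (\<Sum>i=1..int N div 2. (-1) ^ nat i * sin (ext_angle P i)) = 0)"
proof -
  define f where "f = dist F1 F2 / 2"
  obtain c w where w: "cmod w = 1" and F: "F1 = c + w * of_real f" "F2 = c + w * of_real (- f)"
    using foci_normal_form unfolding f_def by metis
  define Q where "Q j = (P j - c) / w" for j
  have "w \<noteq> 0" using w by auto
  then have P: "P = (\<lambda>j. c + w * Q j)" by (simp add: Q_def)
  have f: "0 \<le> f" "f < sc" "f < se"
    using assms(1-3) unfolding f_def is_ellipse_param_def by auto
  interpret confocal_ellipses "sc^2" "sc^2 - f^2" "se^2" "se^2 - f^2"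
    using f assms(3) by unfold_locales (auto simp: power_strict_mono)
  have "periodic_billiard ((\<lambda>z. c + w * z) -` ellipse F1 F2 se) ((\<lambda>z. c + w * z) -` ellipse F1 F2 sc) N Q"
    using periodic_billiard_similarity[OF \<open>w \<noteq> 0\<close>] assms(4) unfolding P .
  then have "periodic_billiard (ellipse (of_real f) (of_real (- f)) se) (ellipse (of_real f) (of_real (- f)) sc) N Q"
    unfolding F ellipse_similarity_preimage[OF w] .
  then have "periodic_billiard {z. outer_level z = 1} caustic N Q"
    using f by (simp add: ellipse_real_foci outer_level_def caustic_def)
  then show ?thesis
    using \<open>w \<noteq> 0\<close> unfolding P by (simp add: ext_angle_similarity periodic_billiard_alternating_sums)
qed

end
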